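(* There is an absolute constant $c>0$ such that for every integer $f\ge1$ and every real $x\ge3$, $$\sum_{\substack{p\ \text{prime},\ f^2\le p\le x\\ p\equiv1 \pmod f}}\frac{1}{p\log(3x/p)}\le c\,\frac{\log\log x}{\varphi(f)\log x}.$$
   Context: $\varphi$ denotes Euler's totient function. *)

theory Defs
  imports "HOL-Analysis.Analysis" "HOL-Number_Theory.Number_Theory"
begin

end

(*
  Selberg's upper bound sieve, sifting by the primes up to z = t^(1/10) that do not divide f,
  gives a Brun-Titchmarsh bound: there are at most 40 t / (phi(f) log t) primes p <= t with
  p = 1 (mod f) and p >= f^2.  The main term is t / (f G), where
  G = sum of mu(d)^2 / phi(d) over d <= z coprime to f satisfies G >= (phi(f) / f) log z,
  and the remainder is O(z^4).

  Group the primes p <= x according to the dyadic block 2^j <= x/p < 2^(j+1), j < K = floor(log2 x).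
  In block j we have log(3x/p) >= (j+1) log 2 and, by the bound above with t = x/2^j,
  the block contributes O(1 / (phi(f) (j+1) (K-j))).  Summing over j gives
  O(H_K / (phi(f) K)) = O(log log x / (phi(f) log x)), H_K being the harmonic number.
*)

theory Submission
  imports Defs
begin

lemma sum_Pow_neg_one_power:
  assumes "finite A"
  shows "(\<Sum>X\<in>Pow A. (-1::'b::comm_ring_1) ^ card X) = (if A = {} then 1 else 0)"
proof -
  have "(\<Sum>X\<in>Pow A. (-1::'b) ^ card X) = (\<Prod>x\<in>A. -1 + 1)"
    using prod_add[OF assms, of "\<lambda>_. -1::'b" "\<lambda>_. 1"] by simp
  then show ?thesis using assms by (simp add: power_0_left)
qed

lemma sum_subsets_between_neg_one_power:
  assumes "finite R" "T \<subseteq> R"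
  shows "(\<Sum>S | T \<subseteq> S \<and> S \<subseteq> R. (-1::'b::comm_ring_1) ^ card (R - S)) = (if R = T then 1 else 0)"
proof -
  have "(\<Sum>S | T \<subseteq> S \<and> S \<subseteq> R. (-1::'b) ^ card (R - S)) = (\<Sum>X\<in>Pow (R - T). (-1) ^ card X)"
    by (rule sum.reindex_bij_witness[where i="\<lambda>X. R - X" and j="\<lambda>S. R - S"]) (use assms in auto)
  also have "\<dots> = (if R = T then 1 else 0)"
    using assms by (subst sum_Pow_neg_one_power) auto
  finally show ?thesis .
qed

lemma prod_distinct_primes_dvd:
  fixes S :: "nat set"
  assumes "finite S" "\<And>p. p \<in> S \<Longrightarrow> prime p" "\<And>p. p \<in> S \<Longrightarrow> p dvd n"
  shows "\<Prod>S dvd n"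
  using assms
proof (induction S rule: finite_induct)
  case (insert p S)
  have "\<not> p dvd \<Prod>S"
  proof
    assume "p dvd \<Prod>S"
    then obtain q where "q \<in> S" "p dvd q"
      using insert.hyps(1) insert.prems(1) by (auto simp: prime_dvd_prod_iff)
    then show False using insert by (metis insert_iff primes_dvd_imp_eq)
  qed
  then have "coprime p (\<Prod>S)"
    using insert.prems(1) by (auto intro: prime_imp_coprime)
  with insert show ?case by (simp add: divides_mult)
qed simp

lemma prime_factors_prod_distinct_primes:
  fixes S :: "nat set"
  assumes "finite S" "\<And>p. p \<in> S \<Longrightarrow> prime p"
  shows "prime_factors (\<Prod>S) = S"
proof -
  have "prime_factors (\<Prod>S) = (\<Union>p\<in>S. prime_factors p)"
    using assms by (subst prime_factors_prod) (auto dest: prime_gt_0_nat)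
  also have "\<dots> = S" using assms by (auto simp: prime_prime_factors)
  finally show ?thesis .
qed

lemma prod_union_dvd_iff:
  fixes S1 S2 :: "nat set"
  assumes "finite S1" "finite S2" "\<And>p. p \<in> S1 \<union> S2 \<Longrightarrow> prime p"
  shows "\<Prod>(S1 \<union> S2) dvd n \<longleftrightarrow> \<Prod>S1 dvd n \<and> \<Prod>S2 dvd n"
proof
  assume "\<Prod>(S1 \<union> S2) dvd n"
  moreover have "\<Prod>S1 dvd \<Prod>(S1 \<union> S2)" "\<Prod>S2 dvd \<Prod>(S1 \<union> S2)"
    using assms by (auto intro: prod_dvd_prod_subset)
  ultimately show "\<Prod>S1 dvd n \<and> \<Prod>S2 dvd n" by (meson dvd_trans)
next
  assume "\<Prod>S1 dvd n \<and> \<Prod>S2 dvd n"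
  then have "p dvd n" if "p \<in> S1 \<union> S2" for p
    using that assms by (meson Un_iff dvd_prodI dvd_trans)
  then show "\<Prod>(S1 \<union> S2) dvd n" using assms by (intro prod_distinct_primes_dvd) auto
qed

lemma card_residue_class_block:
  fixes m r k :: nat
  assumes "r < m"
  shows "card {n \<in> {k<..k+m}. n mod m = r} = 1"
proof -
  define I where "I = {k<..k+m}"
  have inj: "inj_on (\<lambda>n. n mod m) I"
  proof (rule linorder_inj_onI)
    fix n1 n2 assume "n1 < n2" "n1 \<in> I" "n2 \<in> I"
    then have "0 < n2 - n1" "n2 - n1 < m" unfolding I_def by auto
    then have "\<not> m dvd n2 - n1" by (auto dest: dvd_imp_le)
    then show "n1 mod m \<noteq> n2 mod m" using \<open>n1 < n2\<close> mod_eq_dvd_iff_nat[of n1 n2 m] by simp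
  qed auto
  have "card ((\<lambda>n. n mod m) ` I) = card {..<m}"
    using card_image[OF inj] unfolding I_def by simp
  then have "(\<lambda>n. n mod m) ` I = {..<m}"
    using assms by (intro card_subset_eq) auto
  then obtain n0 where n0: "n0 \<in> I" "n0 mod m = r" using assms by (metis image_iff lessThan_iff)
  then have "{n \<in> I. n mod m = r} = {n0}"
    using inj unfolding inj_on_def by auto
  then show ?thesis unfolding I_def by simp
qed

lemma card_residue_class_bounds:
  fixes m r N :: nat
  assumes "r < m"
  shows "N div m \<le> card {n \<in> {1..N}. n mod m = r} \<and> card {n \<in> {1..N}. n mod m = r} \<le> N div m + 1"
proof (induction N rule: less_induct)
  case (less N)
  show ?case
  proof (cases "N < m")
    case True
    have "card {n \<in> {1..N}. n mod m = r} \<le> card {n \<in> {0<..0+m}. n mod m = r}"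
      using True by (intro card_mono) auto
    then show ?thesis using True card_residue_class_block[OF assms, of 0] by simp
  next
    case False
    have "{n \<in> {1..N}. n mod m = r} = {n \<in> {1..N-m}. n mod m = r} \<union> {n \<in> {N-m<..N-m+m}. n mod m = r}"
      using False by auto
    then have "card {n \<in> {1..N}. n mod m = r} = card {n \<in> {1..N-m}. n mod m = r} + 1"
      using card_residue_class_block[OF assms, of "N-m"] by (simp add: card_Un_disjoint disjoint_iff)
    moreover have "N div m = (N - m) div m + 1" using False le_div_geq[of m N] assms by simp
    ultimately show ?thesis using less.IH[of "N-m"] False assms by simp
  qed
qed

lemma card_residue_class_approx:
  fixes m r :: nat and y :: real
  assumes "r < m" "y \<ge> 0"
  shows "\<bar>real (card {n \<in> {1..nat \<lfloor>y\<rfloor>}. n mod m = r}) - y / real m\<bar> \<le> 2"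
proof -
  define N where "N = nat \<lfloor>y\<rfloor>"
  define c where "c = card {n \<in> {1..N}. n mod m = r}"
  define q where "q = N div m"
  have m: "real m \<ge> 1" using assms by simp
  have "q \<le> c" "c \<le> q + 1"
    using card_residue_class_bounds[OF assms(1)] unfolding c_def q_def by auto
  then have "real q \<le> real c" "real c \<le> real q + 1"
    using of_nat_mono[of c "q + 1", where 'a=real] by auto
  then have c: "real q * m \<le> real c * m" "real c * m \<le> real q * m + m"
    using mult_right_mono[of "real q" "real c" "real m"] mult_right_mono[of "real c" "real q + 1" "real m"]
    by (simp_all add: algebra_simps)
  have "real N = real q * real m + real (N mod m)"
    unfolding q_def by (metis of_nat_add of_nat_mult div_mult_mod_eq)
  moreover have "real (N mod m) < real m" using assms by simp
  moreover have "real N \<le> y" "y < real N + 1" unfolding N_def using assms(2) by linarith+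
  ultimately have "y - 2 * m \<le> real c * m" "real c * m \<le> y + m" using c m by linarith+
  then show ?thesis using m unfolding c_def N_def by (simp add: abs_le_iff field_simps)
qed

lemma card_cong_one_dvd_approx:
  fixes f d :: nat and y :: real
  assumes "f \<ge> 1" "d \<ge> 1" "coprime f d" "y \<ge> 0"
  shows "\<bar>real (card {n \<in> {1..nat \<lfloor>y\<rfloor>}. [n = 1] (mod f) \<and> d dvd n}) - y / real (f * d)\<bar> \<le> 2"
proof -
  obtain a where a: "[a = 1] (mod f)" "[a = 0] (mod d)"
    using binary_chinese_remainder_nat[OF assms(3)] by blast
  have "[n = 1] (mod f) \<and> d dvd n \<longleftrightarrow> [n = a] (mod f * d)" for n
    using a assms(3)
    by (metis cong_0_iff cong_modulus_mult_nat cong_sym cong_trans coprime_cong_mult_nat mult.commute)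
  then have "{n \<in> {1..nat \<lfloor>y\<rfloor>}. [n = 1] (mod f) \<and> d dvd n}
      = {n \<in> {1..nat \<lfloor>y\<rfloor>}. n mod (f * d) = a mod (f * d)}"
    by (auto simp: cong_def)
  moreover have "a mod (f * d) < f * d" using assms by simp
  ultimately show ?thesis using card_residue_class_approx[of "a mod (f * d)" "f * d" y] assms by simp
qed

(* For a finite set S of primes, phi_primes S is the totient of the squarefree number \<Prod>S. *)
definition phi_primes :: "nat set \<Rightarrow> real" where
  "phi_primes S = (\<Prod>p\<in>S. real p - 1)"

lemma phi_primes_pos:
  assumes "\<And>p. p \<in> S \<Longrightarrow> prime p"
  shows "phi_primes S > 0"
  unfolding phi_primes_def
proof (rule prod_pos)
  fix p assume "p \<in> S"
  then have "p \<ge> 2" using assms prime_ge_2_nat by blast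
  then show "real p - 1 > 0" by simp
qed

lemma phi_primes_union:
  assumes "finite U" "finite S" "U \<inter> S = {}"
  shows "phi_primes (U \<union> S) = phi_primes U * phi_primes S"
  unfolding phi_primes_def using assms by (rule prod.union_disjoint)

lemma prod_eq_sum_phi_primes:
  fixes S :: "nat set"
  assumes "finite S"
  shows "real (\<Prod>S) = (\<Sum>T\<in>Pow S. phi_primes T)"
proof -
  have "real (\<Prod>S) = (\<Prod>p\<in>S. (real p - 1) + 1)" by simp
  also have "\<dots> = (\<Sum>T\<in>Pow S. (\<Prod>p\<in>T. real p - 1) * (\<Prod>p\<in>S - T. 1))"
    by (rule prod_add[OF assms])
  also have "\<dots> = (\<Sum>T\<in>Pow S. phi_primes T)" by (simp add: phi_primes_def)
  finally show ?thesis .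
qed

lemma div_totient_eq_sum_inverse_phi_primes:
  assumes "f > 0"
  shows "real f / real (totient f) = (\<Sum>U\<in>Pow (prime_factors f). 1 / phi_primes U)"
proof -
  have p2: "real p \<ge> 2" if "p \<in> prime_factors f" for p
  proof -
    have "prime p" using that by auto
    then show ?thesis using prime_ge_2_nat[of p] by simp
  qed
  have "real f / real (totient f) = (\<Prod>p\<in>prime_factors f. 1 / (1 - 1 / real p))"
    using assms by (simp add: totient_formula2 prod_dividef)
  also have "\<dots> = (\<Prod>p\<in>prime_factors f. 1 / (real p - 1) + 1)"
  proof (intro prod.cong refl)
    fix p assume "p \<in> prime_factors f"
    then have "real p \<ge> 2" by (rule p2)
    then show "1 / (1 - 1 / real p) = 1 / (real p - 1) + 1" by (simp add: field_simps)
  qed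
  also have "\<dots> = (\<Sum>U\<in>Pow (prime_factors f). (\<Prod>p\<in>U. 1 / (real p - 1)) * (\<Prod>p\<in>prime_factors f - U. 1))"
    by (rule prod_add) simp
  also have "\<dots> = (\<Sum>U\<in>Pow (prime_factors f). 1 / phi_primes U)"
    by (simp add: phi_primes_def prod_dividef)
  finally show ?thesis .
qed

lemma sum_inverse_powers_le:
  fixes p :: real and N :: "nat set"
  assumes "p > 1" "finite N" "0 \<notin> N"
  shows "(\<Sum>k\<in>N. (1 / p) ^ k) \<le> 1 / (p - 1)"
proof -
  have "(\<Sum>k\<in>N. (1 / p) ^ k) + 1 = (\<Sum>k\<in>insert 0 N. (1 / p) ^ k)"
    using assms(2,3) by simp
  also have "\<dots> < 1 / (1 - 1 / p)" using assms by (intro geometric_sum_less) auto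
  also have "\<dots> = 1 / (p - 1) + 1" using assms(1) by (simp add: field_simps)
  finally show ?thesis by simp
qed

lemma inj_on_multiplicities:
  fixes A V :: "nat set"
  assumes "\<And>n. n \<in> A \<Longrightarrow> n > 0 \<and> prime_factors n = V"
  shows "inj_on (\<lambda>n. restrict (\<lambda>p. multiplicity p n) V) A"
proof (rule inj_onI)
  fix n1 n2 assume n: "n1 \<in> A" "n2 \<in> A"
    and eq: "restrict (\<lambda>p. multiplicity p n1) V = restrict (\<lambda>p. multiplicity p n2) V"
  have "multiplicity p n1 = multiplicity p n2" if "p \<in> V" for p
    using that fun_cong[OF eq, of p] by simp
  then have "(\<Prod>p\<in>V. p ^ multiplicity p n1) = (\<Prod>p\<in>V. p ^ multiplicity p n2)"
    by (intro prod.cong) auto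
  moreover have "(\<Prod>p\<in>V. p ^ multiplicity p n) = n" if "n \<in> A" for n
    using prime_factorization_nat[of n, symmetric] assms[OF that] by simp
  ultimately show "n1 = n2" using n by metis
qed

lemma sum_inverse_with_prime_factors_le:
  fixes A V :: "nat set"
  assumes "finite A" "finite V" "\<And>p. p \<in> V \<Longrightarrow> prime p"
    and A: "\<And>n. n \<in> A \<Longrightarrow> n > 0 \<and> prime_factors n = V"
  shows "(\<Sum>n\<in>A. 1 / real n) \<le> 1 / phi_primes V"
proof -
  define M where "M = Max (\<Union>n\<in>A. (\<lambda>p. multiplicity p n) ` V)"
  define e where "e n = restrict (\<lambda>p. multiplicity p n) V" for n
  define F where "F k = (\<Prod>p\<in>V. (1 / real p) ^ k p)" for k :: "nat \<Rightarrow> nat"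
  have factorization: "(\<Prod>p\<in>V. p ^ multiplicity p n) = n" if "n \<in> A" for n
    using prime_factorization_nat[of n, symmetric] A[OF that] by simp
  have "inj_on e A" unfolding e_def using A by (rule inj_on_multiplicities)
  have "e n \<in> PiE V (\<lambda>_. {1..M})" if n: "n \<in> A" for n
  proof -
    have "multiplicity p n \<in> {1..M}" if p: "p \<in> V" for p
    proof -
      have "multiplicity p n > 0" using A[OF n] p by (auto simp: prime_factors_multiplicity)
      moreover have "multiplicity p n \<le> M"
        unfolding M_def using n p assms(1,2) by (intro Max_ge) auto
      ultimately show ?thesis by simp
    qed
    then show ?thesis unfolding e_def by (simp add: restrict_PiE_iff)
  qed
  then have "e ` A \<subseteq> PiE V (\<lambda>_. {1..M})" by blast
  have "1 / real n = F (e n)" if "n \<in> A" for n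
  proof -
    have "real n = real (\<Prod>p\<in>V. p ^ multiplicity p n)"
      by (simp only: factorization[OF that])
    also have "\<dots> = (\<Prod>p\<in>V. real p ^ multiplicity p n)" by simp
    finally have "real n = (\<Prod>p\<in>V. real p ^ multiplicity p n)" .
    then show ?thesis unfolding F_def e_def by (simp add: prod_dividef power_one_over)
  qed
  then have "(\<Sum>n\<in>A. 1 / real n) = (\<Sum>k\<in>e ` A. F k)"
    using sum.reindex[OF \<open>inj_on e A\<close>, of F] by simp
  also have "\<dots> \<le> (\<Sum>k\<in>PiE V (\<lambda>_. {1..M}). F k)"
    using \<open>e ` A \<subseteq> _\<close> assms(2) unfolding F_def by (intro sum_mono2 finite_PiE prod_nonneg) auto
  also have "\<dots> = (\<Prod>p\<in>V. \<Sum>k\<in>{1..M}. (1 / real p) ^ k)"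
    unfolding F_def using assms(2) by (subst prod_sum_PiE) auto
  also have "\<dots> \<le> (\<Prod>p\<in>V. 1 / (real p - 1))"
  proof (intro prod_mono conjI sum_nonneg)
    fix p assume "p \<in> V"
    then have "real p > 1" using assms(3) prime_gt_1_nat by simp
    then show "(\<Sum>k\<in>{1..M}. (1 / real p) ^ k) \<le> 1 / (real p - 1)"
      by (intro sum_inverse_powers_le) auto
  qed auto
  finally show ?thesis by (simp add: phi_primes_def prod_dividef)
qed

(* The squarefree numbers d <= z all of whose prime factors lie in Q, each represented by
   its set of prime factors. *)
definition sqfree_moduli :: "nat set \<Rightarrow> real \<Rightarrow> nat set set" where
  "sqfree_moduli Q z = {S. S \<subseteq> Q \<and> real (\<Prod>S) \<le> z}"

lemma finite_sqfree_moduli: "finite Q \<Longrightarrow> finite (sqfree_moduli Q z)"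
  unfolding sqfree_moduli_def by (auto intro: finite_subset[of _ "Pow Q"])

lemma empty_in_sqfree_moduli: "z \<ge> 1 \<Longrightarrow> {} \<in> sqfree_moduli Q z"
  unfolding sqfree_moduli_def by simp

lemma sqfree_moduli_downward_closed:
  assumes "S \<in> sqfree_moduli Q z" "T \<subseteq> S" "finite Q" "\<And>p. p \<in> Q \<Longrightarrow> prime p"
  shows "T \<in> sqfree_moduli Q z"
proof -
  have "finite S" "S \<subseteq> Q" using assms(1,3) finite_subset unfolding sqfree_moduli_def by auto
  moreover from this have "\<Prod>S > 0" using assms(4) prime_gt_0_nat by (intro prod_pos) auto
  ultimately have "\<Prod>T \<le> \<Prod>S"
    using assms(2) by (intro dvd_imp_le prod_dvd_prod_subset) auto
  then have "real (\<Prod>T) \<le> real (\<Prod>S)" by (rule of_nat_mono)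
  then show ?thesis using assms unfolding sqfree_moduli_def by auto
qed

lemma card_sqfree_moduli_le:
  assumes "finite Q" "\<And>p. p \<in> Q \<Longrightarrow> prime p" "z \<ge> 0"
  shows "real (card (sqfree_moduli Q z)) \<le> z"
proof -
  let ?D = "sqfree_moduli Q z"
  have primes: "finite S \<and> (\<forall>p\<in>S. prime p)" if "S \<in> ?D" for S
    using that assms finite_subset unfolding sqfree_moduli_def by auto
  have "inj_on Prod ?D"
    by (rule inj_onI) (metis primes prime_factors_prod_distinct_primes)
  moreover have "Prod ` ?D \<subseteq> {1..nat \<lfloor>z\<rfloor>}"
    using primes prime_gt_0_nat
    by (auto simp: sqfree_moduli_def le_nat_floor Suc_le_eq intro!: prod_pos)
  ultimately have "card ?D \<le> card {1..nat \<lfloor>z\<rfloor>}"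
    by (metis card_image card_mono finite_atLeastAtMost)
  then have "real (card ?D) \<le> real (nat \<lfloor>z\<rfloor>)" by simp
  also have "\<dots> \<le> z" using assms(3) by simp
  finally show ?thesis .
qed

lemma finite_primes_le: "finite {p::nat. prime p \<and> real p \<le> z}"
proof -
  have "{p::nat. prime p \<and> real p \<le> z} \<subseteq> {..nat \<lfloor>z\<rfloor>}" by (auto simp: le_nat_floor)
  then show ?thesis by (rule finite_subset) simp
qed

lemma card_primes_le:
  assumes "z \<ge> 0"
  shows "real (card {p::nat. prime p \<and> real p \<le> z}) \<le> z"
proof -
  have "{p::nat. prime p \<and> real p \<le> z} \<subseteq> {1..nat \<lfloor>z\<rfloor>}"
    by (auto simp: le_nat_floor Suc_le_eq prime_gt_0_nat)
  then have "card {p::nat. prime p \<and> real p \<le> z} \<le> card {1..nat \<lfloor>z\<rfloor>}"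
    by (intro card_mono) auto
  then have "real (card {p::nat. prime p \<and> real p \<le> z}) \<le> real (nat \<lfloor>z\<rfloor>)" by simp
  also have "\<dots> \<le> z" using assms by simp
  finally show ?thesis .
qed

lemma ln_le_sum_inverse_phi_primes:
  assumes "z \<ge> 1"
  shows "ln z \<le> (\<Sum>V\<in>sqfree_moduli {p. prime p \<and> real p \<le> z} z. 1 / phi_primes V)"
proof -
  define E where "E = sqfree_moduli {p. prime p \<and> real p \<le> z} z"
  define N where "N = nat \<lfloor>z\<rfloor>"
  have E: "finite V" "\<forall>p\<in>V. prime p" if "V \<in> E" for V
    using that finite_primes_le[of z] finite_subset unfolding E_def sqfree_moduli_def by auto
  have "prime_factors n \<in> E" if "n \<in> {1..N}" for n
  proof -
    have "real n \<le> real N" using that by simp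
    also have "\<dots> \<le> z" unfolding N_def using assms by simp
    finally have n: "real n \<le> z" .
    have "real (\<Prod>(prime_factors n)) \<le> real n"
      using that by (intro of_nat_mono dvd_imp_le prod_distinct_primes_dvd) auto
    moreover have "prime_factors n \<subseteq> {p. prime p \<and> real p \<le> z}"
    proof
      fix p assume p: "p \<in> prime_factors n"
      then have "real p \<le> real n" using \<open>n \<in> {1..N}\<close> by (intro of_nat_mono dvd_imp_le) auto
      with p n show "p \<in> {p. prime p \<and> real p \<le> z}" by auto
    qed
    ultimately show ?thesis using n unfolding E_def sqfree_moduli_def by auto
  qed
  then have "(\<Sum>n\<in>{1..N}. 1 / real n) = (\<Sum>V\<in>E. \<Sum>n | n \<in> {1..N} \<and> prime_factors n = V. 1 / real n)"
    using finite_primes_le[of z] by (intro sum.group[symmetric]) (auto simp: E_def finite_sqfree_moduli)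
  also have "\<dots> \<le> (\<Sum>V\<in>E. 1 / phi_primes V)"
    using E by (intro sum_mono sum_inverse_with_prime_factors_le) auto
  finally have "harm N \<le> (\<Sum>V\<in>E. 1 / phi_primes V)"
    by (simp add: harm_def divide_inverse)
  moreover have "ln z \<le> ln (real N + 1)"
  proof -
    have "z \<le> real N + 1" unfolding N_def using assms by linarith
    then show ?thesis using assms by simp
  qed
  ultimately show ?thesis using ln_le_harm[of N] unfolding E_def by linarith
qed

locale selberg_sieve =
  fixes f :: nat and z :: real
  assumes f_ge_1: "f \<ge> 1" and z_ge_1: "z \<ge> 1"
begin

definition sift_primes :: "nat set" where
  "sift_primes = {p. prime p \<and> real p \<le> z \<and> \<not> p dvd f}"

abbreviation moduli :: "nat set set" where
  "moduli \<equiv> sqfree_moduli sift_primes z"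

definition G :: real where
  "G = (\<Sum>S\<in>moduli. 1 / phi_primes S)"

(* Selberg's weights in divisor notation (d = \<Prod>S, r = \<Prod>R, mu the Moebius function):
   ydiag R = mu(r) / (phi(r) G) and lam S = d * (sum of mu(r/d) * ydiag R over d | r <= z). *)
definition ydiag :: "nat set \<Rightarrow> real" where
  "ydiag R = (-1) ^ card R / (phi_primes R * G)"

definition lam :: "nat set \<Rightarrow> real" where
  "lam S = real (\<Prod>S) * (\<Sum>R\<in>{R \<in> moduli. S \<subseteq> R}. (-1) ^ card (R - S) * ydiag R)"

(* Selberg's majorant: sieve_weight n ^ 2 is nonnegative, and it equals 1 at every prime n > z
   because only the modulus {} divides n and lam {} = 1. *)
definition sieve_weight :: "nat \<Rightarrow> real" where
  "sieve_weight n = (\<Sum>S\<in>moduli. if \<Prod>S dvd n then lam S else 0)"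

definition quad_form :: real where
  "quad_form = (\<Sum>S1\<in>moduli. \<Sum>S2\<in>moduli. lam S1 * lam S2 / real (\<Prod>(S1 \<union> S2)))"

lemma finite_sift_primes: "finite sift_primes"
  by (rule finite_subset[OF _ finite_primes_le]) (auto simp: sift_primes_def)

lemma sift_primes_prime: "p \<in> sift_primes \<Longrightarrow> prime p"
  unfolding sift_primes_def by simp

lemma finite_moduli: "finite moduli"
  using finite_sift_primes by (rule finite_sqfree_moduli)

lemma finite_modulus: "S \<in> moduli \<Longrightarrow> finite S"
  using finite_sift_primes finite_subset unfolding sqfree_moduli_def by blast

lemma modulus_prime: "S \<in> moduli \<Longrightarrow> p \<in> S \<Longrightarrow> prime p"
  using sift_primes_prime unfolding sqfree_moduli_def by blast

lemma prod_modulus_pos: "S \<in> moduli \<Longrightarrow> \<Prod>S > 0"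
  by (meson modulus_prime prime_gt_0_nat prod_pos)

lemma moduli_downward_closed: "S \<in> moduli \<Longrightarrow> T \<subseteq> S \<Longrightarrow> T \<in> moduli"
  by (rule sqfree_moduli_downward_closed[OF _ _ finite_sift_primes sift_primes_prime])

lemma empty_in_moduli: "{} \<in> moduli"
  using z_ge_1 by (rule empty_in_sqfree_moduli)

lemma phi_modulus_pos: "S \<in> moduli \<Longrightarrow> phi_primes S > 0"
  by (meson modulus_prime phi_primes_pos)

lemma prod_union_moduli_dvd_iff:
  "S1 \<in> moduli \<Longrightarrow> S2 \<in> moduli \<Longrightarrow> \<Prod>(S1 \<union> S2) dvd n \<longleftrightarrow> \<Prod>S1 dvd n \<and> \<Prod>S2 dvd n"
  by (rule prod_union_dvd_iff) (auto intro: finite_modulus modulus_prime)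

lemma modulus_subset: "S \<in> moduli \<Longrightarrow> S \<subseteq> sift_primes"
  unfolding sqfree_moduli_def by simp

lemma coprime_prod_sift_primes: "S \<subseteq> sift_primes \<Longrightarrow> coprime f (\<Prod>S)"
  unfolding sift_primes_def
  by (auto intro!: prod_coprime_right simp: coprime_commute prime_imp_coprime)

lemma G_ge_1: "G \<ge> 1"
proof -
  have "G = 1 / phi_primes {} + (\<Sum>S\<in>moduli - {{}}. 1 / phi_primes S)"
    unfolding G_def using finite_moduli empty_in_moduli by (simp add: sum.remove)
  moreover have "(\<Sum>S\<in>moduli - {{}}. 1 / phi_primes S) \<ge> 0"
    using phi_modulus_pos by (intro sum_nonneg) (auto intro: less_imp_le)
  ultimately show ?thesis by (simp add: phi_primes_def)
qed

lemma sum_inverse_phi_div_G: "(\<Sum>R\<in>moduli. 1 / phi_primes R / G) = 1"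
proof -
  have "(\<Sum>R\<in>moduli. 1 / phi_primes R / G) = G / G"
    by (simp only: G_def sum_divide_distrib)
  then show ?thesis using G_ge_1 by simp
qed

lemma abs_ydiag: "R \<in> moduli \<Longrightarrow> \<bar>ydiag R\<bar> = 1 / phi_primes R / G"
  using phi_modulus_pos[of R] G_ge_1 by (simp add: ydiag_def abs_divide abs_mult power_abs)

lemma sum_abs_ydiag: "(\<Sum>R\<in>moduli. \<bar>ydiag R\<bar>) = 1"
proof -
  have "(\<Sum>R\<in>moduli. \<bar>ydiag R\<bar>) = (\<Sum>R\<in>moduli. 1 / phi_primes R / G)"
    by (rule sum.cong[OF refl abs_ydiag])
  also have "\<dots> = 1" by (rule sum_inverse_phi_div_G)
  finally show ?thesis .
qed

lemma lam_empty: "lam {} = 1"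
proof -
  have "lam {} = (\<Sum>R\<in>moduli. (-1) ^ card R * ydiag R)"
    unfolding lam_def by simp
  also have "\<dots> = (\<Sum>R\<in>moduli. 1 / phi_primes R / G)"
  proof (rule sum.cong[OF refl])
    fix R :: "nat set"
    have "(-1::real) ^ card R * (-1) ^ card R = 1" by (simp flip: power_mult_distrib)
    then show "(-1) ^ card R * ydiag R = 1 / phi_primes R / G"
      by (simp only: ydiag_def times_divide_eq_right divide_divide_eq_left)
  qed
  also have "\<dots> = 1" by (rule sum_inverse_phi_div_G)
  finally show ?thesis .
qed

lemma sum_lam_div_prod:
  assumes "T \<in> moduli"
  shows "(\<Sum>S\<in>{S \<in> moduli. T \<subseteq> S}. lam S / real (\<Prod>S)) = ydiag T"
proof -
  have "(\<Sum>S\<in>{S \<in> moduli. T \<subseteq> S}. lam S / real (\<Prod>S))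
      = (\<Sum>S\<in>{S \<in> moduli. T \<subseteq> S}. \<Sum>R\<in>{R \<in> moduli. S \<subseteq> R}. (-1) ^ card (R - S) * ydiag R)"
    using prod_modulus_pos by (intro sum.cong refl) (simp add: lam_def del: of_nat_prod)
  also have "\<dots> = (\<Sum>R\<in>moduli. \<Sum>S\<in>{S \<in> {S \<in> moduli. T \<subseteq> S}. S \<subseteq> R}. (-1) ^ card (R - S) * ydiag R)"
    using finite_moduli by (intro sum.swap_restrict) auto
  also have "\<dots> = (\<Sum>R\<in>moduli. if R = T then ydiag R else 0)"
  proof (rule sum.cong[OF refl])
    fix R assume R: "R \<in> moduli"
    show "(\<Sum>S\<in>{S \<in> {S \<in> moduli. T \<subseteq> S}. S \<subseteq> R}. (-1) ^ card (R - S) * ydiag R)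
        = (if R = T then ydiag R else 0)"
    proof (cases "T \<subseteq> R")
      case True
      have "{S \<in> {S \<in> moduli. T \<subseteq> S}. S \<subseteq> R} = {S. T \<subseteq> S \<and> S \<subseteq> R}"
        using R moduli_downward_closed by auto
      then show ?thesis
        using sum_subsets_between_neg_one_power[OF finite_modulus[OF R] True, where 'b=real]
        by (simp add: sum_distrib_right[symmetric])
    next
      case False
      then have empty: "{S \<in> {S \<in> moduli. T \<subseteq> S}. S \<subseteq> R} = {}" by blast
      show ?thesis unfolding empty using False by auto
    qed
  qed
  also have "\<dots> = ydiag T" using assms finite_moduli by simp
  finally show ?thesis .
qed

(* In divisor notation 1 / lcm(d1, d2) = (sum of phi(t) over t | gcd(d1, d2)) / (d1 d2);
   this is what diagonalises quad_form. *)
lemma inverse_prod_union_moduli: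
  assumes "S1 \<in> moduli" "S2 \<in> moduli"
  shows "1 / real (\<Prod>(S1 \<union> S2))
       = (\<Sum>T\<in>moduli. if T \<subseteq> S1 \<and> T \<subseteq> S2 then phi_primes T else 0) / (real (\<Prod>S1) * real (\<Prod>S2))"
proof -
  have fin: "finite S1" "finite S2" using assms finite_modulus by auto
  have "{T \<in> moduli. T \<subseteq> S1 \<and> T \<subseteq> S2} = Pow (S1 \<inter> S2)"
    using assms(1) moduli_downward_closed by blast
  then have "(\<Sum>T\<in>moduli. if T \<subseteq> S1 \<and> T \<subseteq> S2 then phi_primes T else 0) = (\<Sum>T\<in>Pow (S1 \<inter> S2). phi_primes T)"
    by (simp only: sum.inter_filter[OF finite_moduli, symmetric])
  also have "\<dots> = real (\<Prod>(S1 \<inter> S2))"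
    using fin by (intro prod_eq_sum_phi_primes[symmetric]) simp
  finally have "(\<Sum>T\<in>moduli. if T \<subseteq> S1 \<and> T \<subseteq> S2 then phi_primes T else 0) = real (\<Prod>(S1 \<inter> S2))" .
  moreover have "real (\<Prod>(S1 \<union> S2)) * real (\<Prod>(S1 \<inter> S2)) = real (\<Prod>S1) * real (\<Prod>S2)"
    using prod.union_inter[OF fin, of "\<lambda>p. p"] by (metis of_nat_mult)
  moreover have "real (\<Prod>(S1 \<union> S2)) > 0"
  proof -
    have "0 < \<Prod>(S1 \<union> S2)"
      by (rule prod_pos) (use assms modulus_prime prime_gt_0_nat in blast)
    then show ?thesis by (simp del: of_nat_prod)
  qed
  moreover have "\<Prod>S1 > 0" "\<Prod>S2 > 0" using assms by (simp_all add: prod_modulus_pos)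
  ultimately show ?thesis by (simp add: field_simps del: of_nat_prod)
qed

lemma quad_form_eq_sum_phi_ydiag_sq: "quad_form = (\<Sum>T\<in>moduli. phi_primes T * (ydiag T)\<^sup>2)"
proof -
  define a where "a T S = (if T \<subseteq> S then lam S / real (\<Prod>S) else 0)" for T S
  have ydiag_eq: "ydiag T = (\<Sum>S\<in>moduli. a T S)" if "T \<in> moduli" for T
    unfolding a_def sum_lam_div_prod[OF that, symmetric] using finite_moduli by (rule sum.inter_filter)
  have "(\<Sum>T\<in>moduli. phi_primes T * (ydiag T)\<^sup>2)
      = (\<Sum>T\<in>moduli. phi_primes T * ((\<Sum>S2\<in>moduli. a T S2) * (\<Sum>S1\<in>moduli. a T S1)))"
    by (intro sum.cong refl) (simp add: ydiag_eq power2_eq_square)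
  also have "\<dots> = (\<Sum>T\<in>moduli. \<Sum>S1\<in>moduli. \<Sum>S2\<in>moduli. phi_primes T * (a T S2 * a T S1))"
    by (simp add: sum_distrib_left sum_distrib_right mult.assoc)
  also have "\<dots> = (\<Sum>S1\<in>moduli. \<Sum>T\<in>moduli. \<Sum>S2\<in>moduli. phi_primes T * (a T S2 * a T S1))"
    by (rule sum.swap)
  also have "\<dots> = (\<Sum>S1\<in>moduli. \<Sum>S2\<in>moduli. \<Sum>T\<in>moduli. phi_primes T * (a T S2 * a T S1))"
    by (intro sum.cong refl sum.swap)
  also have "\<dots> = quad_form"
    unfolding quad_form_def
  proof (intro sum.cong refl)
    fix S1 S2 assume S: "S1 \<in> moduli" "S2 \<in> moduli"
    have "(\<Sum>T\<in>moduli. phi_primes T * (a T S2 * a T S1))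
        = (\<Sum>T\<in>moduli. lam S1 * lam S2 / (real (\<Prod>S1) * real (\<Prod>S2))
            * (if T \<subseteq> S1 \<and> T \<subseteq> S2 then phi_primes T else 0))"
      by (intro sum.cong refl) (simp add: a_def ac_simps del: of_nat_prod)
    also have "\<dots> = lam S1 * lam S2 / (real (\<Prod>S1) * real (\<Prod>S2))
        * (\<Sum>T\<in>moduli. if T \<subseteq> S1 \<and> T \<subseteq> S2 then phi_primes T else 0)"
      by (rule sum_distrib_left[symmetric])
    also have "\<dots> = lam S1 * lam S2 * ((\<Sum>T\<in>moduli. if T \<subseteq> S1 \<and> T \<subseteq> S2 then phi_primes T else 0)
        / (real (\<Prod>S1) * real (\<Prod>S2)))"
      by simp
    also have "\<dots> = lam S1 * lam S2 * (1 / real (\<Prod>(S1 \<union> S2)))"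
      by (simp only: inverse_prod_union_moduli[OF S])
    also have "\<dots> = lam S1 * lam S2 / real (\<Prod>(S1 \<union> S2))"
      by simp
    finally show "(\<Sum>T\<in>moduli. phi_primes T * (a T S2 * a T S1)) = lam S1 * lam S2 / real (\<Prod>(S1 \<union> S2))" .
  qed
  finally show ?thesis ..
qed

lemma quad_form_eq: "quad_form = 1 / G"
proof -
  have "quad_form = (\<Sum>T\<in>moduli. 1 / phi_primes T / G) / G"
    unfolding quad_form_eq_sum_phi_ydiag_sq sum_divide_distrib
  proof (rule sum.cong[OF refl])
    fix T assume T: "T \<in> moduli"
    have "(ydiag T)\<^sup>2 = (1 / phi_primes T / G)\<^sup>2"
      using abs_ydiag[OF T] by (metis power2_abs)
    then show "phi_primes T * (ydiag T)\<^sup>2 = 1 / phi_primes T / G / G"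
      using phi_modulus_pos[OF T] G_ge_1 by (simp add: power2_eq_square field_simps)
  qed
  then show ?thesis using sum_inverse_phi_div_G by simp
qed

lemma abs_lam_le:
  assumes "S \<in> moduli"
  shows "\<bar>lam S\<bar> \<le> z"
proof -
  have "\<bar>\<Sum>R\<in>{R \<in> moduli. S \<subseteq> R}. (-1) ^ card (R - S) * ydiag R\<bar>
      \<le> (\<Sum>R\<in>{R \<in> moduli. S \<subseteq> R}. \<bar>(-1) ^ card (R - S) * ydiag R\<bar>)"
    by (rule sum_abs)
  also have "\<dots> \<le> (\<Sum>R\<in>moduli. \<bar>ydiag R\<bar>)"
    using finite_moduli by (simp add: abs_mult power_abs) (intro sum_mono2; auto)
  finally have "\<bar>lam S\<bar> \<le> real (\<Prod>S)"
    using sum_abs_ydiag unfolding lam_def by (simp add: abs_mult mult_left_le del: of_nat_prod)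
  also have "\<dots> \<le> z" using assms unfolding sqfree_moduli_def by simp
  finally show ?thesis .
qed

lemma sum_abs_lam_le: "(\<Sum>S\<in>moduli. \<bar>lam S\<bar>) \<le> z\<^sup>2"
proof -
  have "(\<Sum>S\<in>moduli. \<bar>lam S\<bar>) \<le> real (card moduli) * z"
    using abs_lam_le by (rule sum_bounded_above)
  also have "\<dots> \<le> z * z"
    using card_sqfree_moduli_le[OF finite_sift_primes sift_primes_prime] z_ge_1
    by (intro mult_right_mono) auto
  finally show ?thesis by (simp add: power2_eq_square)
qed

lemma sieve_weight_prime:
  assumes "prime p" "z < real p"
  shows "sieve_weight p = 1"
proof -
  have "\<Prod>S dvd p \<longleftrightarrow> S = {}" if "S \<in> moduli" for S
  proof
    assume "\<Prod>S dvd p"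
    show "S = {}"
    proof (rule ccontr)
      assume "S \<noteq> {}"
      then obtain q where q: "q \<in> S" by auto
      then have "q dvd p" using \<open>\<Prod>S dvd p\<close> finite_modulus[OF that] by (meson dvd_prodI dvd_trans)
      then have "q = p" using q that assms modulus_prime by (meson primes_dvd_imp_eq)
      moreover have "real q \<le> z" using q that unfolding sqfree_moduli_def sift_primes_def by auto
      ultimately show False using assms by simp
    qed
  qed simp
  then have "sieve_weight p = (\<Sum>S\<in>moduli. if S = {} then lam S else 0)"
    unfolding sieve_weight_def by (intro sum.cong) auto
  also have "\<dots> = 1" using finite_moduli empty_in_moduli lam_empty by simp
  finally show ?thesis .
qed

lemma sum_sieve_weight_sq:
  assumes "finite A"
  shows "(\<Sum>n\<in>A. (sieve_weight n)\<^sup>2)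
       = (\<Sum>S1\<in>moduli. \<Sum>S2\<in>moduli. lam S1 * lam S2 * real (card {n \<in> A. \<Prod>(S1 \<union> S2) dvd n}))"
proof -
  have "(sieve_weight n)\<^sup>2
      = (\<Sum>S1\<in>moduli. \<Sum>S2\<in>moduli. if \<Prod>(S1 \<union> S2) dvd n then lam S1 * lam S2 else 0)" for n
  proof -
    have "(sieve_weight n)\<^sup>2 = (\<Sum>S1\<in>moduli. \<Sum>S2\<in>moduli.
        (if \<Prod>S1 dvd n then lam S1 else 0) * (if \<Prod>S2 dvd n then lam S2 else 0))"
      unfolding sieve_weight_def power2_eq_square by (simp add: sum_product)
    also have "\<dots> = (\<Sum>S1\<in>moduli. \<Sum>S2\<in>moduli. if \<Prod>(S1 \<union> S2) dvd n then lam S1 * lam S2 else 0)"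
      using prod_union_moduli_dvd_iff by (intro sum.cong refl) auto
    finally show ?thesis .
  qed
  then have "(\<Sum>n\<in>A. (sieve_weight n)\<^sup>2)
      = (\<Sum>S1\<in>moduli. \<Sum>S2\<in>moduli. \<Sum>n\<in>A. if \<Prod>(S1 \<union> S2) dvd n then lam S1 * lam S2 else 0)"
    by (simp add: sum.swap[of _ A])
  also have "\<dots> = (\<Sum>S1\<in>moduli. \<Sum>S2\<in>moduli. lam S1 * lam S2 * real (card {n \<in> A. \<Prod>(S1 \<union> S2) dvd n}))"
  proof (intro sum.cong refl)
    fix S1 S2
    have "(\<Sum>n\<in>A. if \<Prod>(S1 \<union> S2) dvd n then lam S1 * lam S2 else 0)
        = (\<Sum>n\<in>{n \<in> A. \<Prod>(S1 \<union> S2) dvd n}. lam S1 * lam S2)"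
      using assms by (rule sum.inter_filter[symmetric])
    then show "(\<Sum>n\<in>A. if \<Prod>(S1 \<union> S2) dvd n then lam S1 * lam S2 else 0)
        = lam S1 * lam S2 * real (card {n \<in> A. \<Prod>(S1 \<union> S2) dvd n})"
      by (simp add: mult.commute)
  qed
  finally show ?thesis .
qed

lemma lam_mult_card_dvd_le:
  assumes S: "S1 \<in> moduli" "S2 \<in> moduli" and "y \<ge> 0"
  shows "lam S1 * lam S2 * real (card {n \<in> {1..nat \<lfloor>y\<rfloor>}. [n = 1] (mod f) \<and> \<Prod>(S1 \<union> S2) dvd n})
         \<le> y / real f * (lam S1 * lam S2 / real (\<Prod>(S1 \<union> S2))) + 2 * (\<bar>lam S1\<bar> * \<bar>lam S2\<bar>)"
proof -
  define d where "d = \<Prod>(S1 \<union> S2)"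
  define c where "c = real (card {n \<in> {1..nat \<lfloor>y\<rfloor>}. [n = 1] (mod f) \<and> d dvd n})"
  have "S1 \<union> S2 \<subseteq> sift_primes" using S modulus_subset by blast
  then have "coprime f d" "d \<ge> 1"
    unfolding d_def using coprime_prod_sift_primes sift_primes_prime prime_gt_0_nat
    by (auto simp: Suc_le_eq intro!: prod_pos)
  then have err: "\<bar>c - y / real (f * d)\<bar> \<le> 2"
    unfolding c_def using card_cong_one_dvd_approx f_ge_1 assms by simp
  have "lam S1 * lam S2 * (c - y / real (f * d)) \<le> \<bar>lam S1 * lam S2\<bar> * \<bar>c - y / real (f * d)\<bar>"
    by (metis abs_ge_self abs_mult)
  also have "\<dots> \<le> \<bar>lam S1 * lam S2\<bar> * 2"
    using err by (intro mult_left_mono) auto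
  finally show ?thesis unfolding c_def d_def by (simp add: abs_mult field_simps del: of_nat_prod)
qed

lemma card_sifted_le_quad_form:
  assumes "y \<ge> 0"
  shows "real (card {p \<in> {1..nat \<lfloor>y\<rfloor>}. [p = 1] (mod f) \<and> prime p \<and> z < real p})
         \<le> y / real f * quad_form + 2 * (\<Sum>S\<in>moduli. \<bar>lam S\<bar>)\<^sup>2"
proof -
  define A where "A = {n \<in> {1..nat \<lfloor>y\<rfloor>}. [n = 1] (mod f)}"
  let ?B = "{p \<in> {1..nat \<lfloor>y\<rfloor>}. [p = 1] (mod f) \<and> prime p \<and> z < real p}"
  have "real (card ?B) = (\<Sum>p\<in>?B. (sieve_weight p)\<^sup>2)"
    using sieve_weight_prime by simp
  also have "\<dots> \<le> (\<Sum>n\<in>A. (sieve_weight n)\<^sup>2)"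
    unfolding A_def by (intro sum_mono2) auto
  also have "\<dots> = (\<Sum>S1\<in>moduli. \<Sum>S2\<in>moduli. lam S1 * lam S2 * real (card {n \<in> A. \<Prod>(S1 \<union> S2) dvd n}))"
    unfolding A_def by (intro sum_sieve_weight_sq) simp
  also have "\<dots> \<le> (\<Sum>S1\<in>moduli. \<Sum>S2\<in>moduli.
      y / real f * (lam S1 * lam S2 / real (\<Prod>(S1 \<union> S2))) + 2 * (\<bar>lam S1\<bar> * \<bar>lam S2\<bar>))"
  proof (intro sum_mono)
    fix S1 S2 assume S: "S1 \<in> moduli" "S2 \<in> moduli"
    have "{n \<in> A. \<Prod>(S1 \<union> S2) dvd n} = {n \<in> {1..nat \<lfloor>y\<rfloor>}. [n = 1] (mod f) \<and> \<Prod>(S1 \<union> S2) dvd n}"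
      unfolding A_def by auto
    then show "lam S1 * lam S2 * real (card {n \<in> A. \<Prod>(S1 \<union> S2) dvd n})
        \<le> y / real f * (lam S1 * lam S2 / real (\<Prod>(S1 \<union> S2))) + 2 * (\<bar>lam S1\<bar> * \<bar>lam S2\<bar>)"
      using lam_mult_card_dvd_le[OF S assms] by (simp only:)
  qed
  also have "\<dots> = y / real f * quad_form + 2 * (\<Sum>S\<in>moduli. \<bar>lam S\<bar>)\<^sup>2"
  proof -
    have "(\<Sum>S\<in>moduli. \<bar>lam S\<bar>)\<^sup>2 = (\<Sum>S1\<in>moduli. \<Sum>S2\<in>moduli. \<bar>lam S1\<bar> * \<bar>lam S2\<bar>)"
      by (simp only: power2_eq_square sum_product)
    then show ?thesis by (simp add: quad_form_def sum.distrib sum_distrib_left)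
  qed
  finally show ?thesis .
qed

lemma sum_Pow_prime_factors_mult_G:
  "(\<Sum>U\<in>Pow (prime_factors f). 1 / phi_primes U) * G
     = (\<Sum>(U, S)\<in>Pow (prime_factors f) \<times> moduli. 1 / phi_primes (U \<union> S))"
proof -
  have "(\<Sum>U\<in>Pow (prime_factors f). 1 / phi_primes U) * G
      = (\<Sum>U\<in>Pow (prime_factors f). \<Sum>S\<in>moduli. 1 / phi_primes U * (1 / phi_primes S))"
    unfolding G_def by (rule sum_product)
  also have "\<dots> = (\<Sum>U\<in>Pow (prime_factors f). \<Sum>S\<in>moduli. 1 / phi_primes (U \<union> S))"
  proof (intro sum.cong refl)
    fix U S assume U: "U \<in> Pow (prime_factors f)" and S: "S \<in> moduli"
    have "U \<inter> S = {}"
      using U modulus_subset[OF S] unfolding sift_primes_def by (auto simp: in_prime_factors_iff)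
    moreover have "finite U" using U finite_subset by auto
    ultimately show "1 / phi_primes U * (1 / phi_primes S) = 1 / phi_primes (U \<union> S)"
      using finite_modulus[OF S] by (simp add: phi_primes_union)
  qed
  also have "\<dots> = (\<Sum>(U, S)\<in>Pow (prime_factors f) \<times> moduli. 1 / phi_primes (U \<union> S))"
    by (rule sum.cartesian_product)
  finally show ?thesis .
qed

lemma sum_inverse_phi_primes_le_mult_G:
  "(\<Sum>V\<in>sqfree_moduli {p. prime p \<and> real p \<le> z} z. 1 / phi_primes V)
     \<le> (\<Sum>U\<in>Pow (prime_factors f). 1 / phi_primes U) * G"
proof -
  define F where "F = prime_factors f"
  define E where "E = sqfree_moduli {p. prime p \<and> real p \<le> z} z"
  define g where "g = (\<lambda>(U, S). 1 / phi_primes (U \<union> S))"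
  define h where "h V = (V \<inter> F, V - F)" for V :: "nat set"
  have "inj_on h E" unfolding h_def by (rule inj_onI) auto
  have h_mem: "h V \<in> Pow F \<times> moduli" if "V \<in> E" for V
  proof -
    have "V - F \<in> E" unfolding E_def
      by (rule sqfree_moduli_downward_closed[OF that[unfolded E_def] _ finite_primes_le]) auto
    moreover have "V - F \<subseteq> sift_primes"
      using that f_ge_1 unfolding E_def F_def sqfree_moduli_def sift_primes_def
      by (auto simp: in_prime_factors_iff)
    ultimately show ?thesis unfolding h_def E_def sqfree_moduli_def by auto
  qed
  have g_nonneg: "g x \<ge> 0" if "x \<in> Pow F \<times> moduli" for x
  proof -
    obtain U S where x: "x = (U, S)" by (rule prod.exhaust)
    with that have "U \<subseteq> F" "S \<in> moduli" by auto
    have "prime p" if "p \<in> U \<union> S" for p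
      using that \<open>U \<subseteq> F\<close> \<open>S \<in> moduli\<close> modulus_prime unfolding F_def
      by (auto dest: in_prime_factors_imp_prime)
    then have "phi_primes (U \<union> S) > 0" by (rule phi_primes_pos)
    then show ?thesis unfolding g_def x by simp
  qed
  have "(\<Sum>V\<in>E. 1 / phi_primes V) = (\<Sum>V\<in>E. g (h V))"
    unfolding g_def h_def by (simp add: Int_Diff_Un)
  also have "\<dots> = (\<Sum>x\<in>h ` E. g x)"
    using \<open>inj_on h E\<close> by (simp add: sum.reindex)
  also have "\<dots> \<le> (\<Sum>x\<in>Pow F \<times> moduli. g x)"
  proof (rule sum_mono2)
    show "finite (Pow F \<times> moduli)" using finite_moduli unfolding F_def by simp
    show "h ` E \<subseteq> Pow F \<times> moduli" using h_mem by blast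
  qed (use g_nonneg in blast)
  also have "\<dots> = (\<Sum>U\<in>Pow F. 1 / phi_primes U) * G"
    unfolding g_def F_def by (rule sum_Pow_prime_factors_mult_G[symmetric])
  finally show ?thesis unfolding E_def F_def .
qed

lemma ln_le_div_totient_mult_G: "ln z \<le> real f / real (totient f) * G"
proof -
  have "ln z \<le> (\<Sum>V\<in>sqfree_moduli {p. prime p \<and> real p \<le> z} z. 1 / phi_primes V)"
    using z_ge_1 by (rule ln_le_sum_inverse_phi_primes)
  also have "\<dots> \<le> (\<Sum>U\<in>Pow (prime_factors f). 1 / phi_primes U) * G"
    by (rule sum_inverse_phi_primes_le_mult_G)
  also have "\<dots> = real f / real (totient f) * G"
    using f_ge_1 by (subst div_totient_eq_sum_inverse_phi_primes) auto
  finally show ?thesis .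
qed

lemma card_sifted_primes_le:
  assumes "y \<ge> 0" "z > 1"
  shows "real (card {p \<in> {1..nat \<lfloor>y\<rfloor>}. [p = 1] (mod f) \<and> prime p \<and> z < real p})
         \<le> y / (real (totient f) * ln z) + 2 * z ^ 4"
proof -
  have "real (totient f) > 0" using f_ge_1 by simp
  then have "real (totient f) * ln z \<le> real f * G"
    using ln_le_div_totient_mult_G by (simp add: field_simps)
  moreover have "real (totient f) * ln z > 0" using f_ge_1 assms(2) by simp
  ultimately have "y / (real f * G) \<le> y / (real (totient f) * ln z)"
    using assms(1) by (intro divide_left_mono) auto
  then have "y / real f * quad_form \<le> y / (real (totient f) * ln z)"
    unfolding quad_form_eq by simp
  moreover have "(\<Sum>S\<in>moduli. \<bar>lam S\<bar>)\<^sup>2 \<le> (z\<^sup>2)\<^sup>2"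
    using sum_abs_lam_le by (rule power_mono) (auto intro: sum_nonneg)
  ultimately show ?thesis using card_sifted_le_quad_form[OF assms(1)] by simp
qed

lemma card_primes_cong_one_le:
  assumes "t \<ge> 0" "z > 1"
  shows "real (card {p. prime p \<and> real p \<le> t \<and> [p = 1] (mod f)})
         \<le> z + t / (real (totient f) * ln z) + 2 * z ^ 4"
proof -
  let ?P = "{p. prime p \<and> real p \<le> t \<and> [p = 1] (mod f)}"
  let ?small = "{p::nat. prime p \<and> real p \<le> z}"
  let ?large = "{p \<in> {1..nat \<lfloor>t\<rfloor>}. [p = 1] (mod f) \<and> prime p \<and> z < real p}"
  have "?P \<subseteq> ?small \<union> ?large"
  proof
    fix p assume "p \<in> ?P"
    then have p: "prime p" "real p \<le> t" "[p = 1] (mod f)" by auto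
    then have "p \<in> {1..nat \<lfloor>t\<rfloor>}" by (auto simp: le_nat_floor Suc_le_eq prime_gt_0_nat)
    with p show "p \<in> ?small \<union> ?large" by auto
  qed
  then have "card ?P \<le> card (?small \<union> ?large)"
    using finite_primes_le by (intro card_mono) auto
  also have "\<dots> \<le> card ?small + card ?large" by (rule card_Un_le)
  finally have "real (card ?P) \<le> real (card ?small) + real (card ?large)"
    by (simp only: of_nat_add[symmetric] of_nat_le_iff)
  also have "\<dots> \<le> z + (t / (real (totient f) * ln z) + 2 * z ^ 4)"
    using card_primes_le[of z] card_sifted_primes_le[of t] assms by (intro add_mono) auto
  finally show ?thesis by simp
qed

end

lemma sieve_remainder_le:
  fixes z q :: real
  assumes "z > 1" "q > 0" "q \<le> z ^ 5"
  shows "z + 2 * z ^ 4 \<le> 30 * z ^ 10 / (q * ln (z ^ 10))"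
proof -
  have ln: "ln (z ^ 10) = 10 * ln z" using assms(1) by (simp add: ln_realpow)
  have "ln z \<le> z" using ln_le_minus_one[of z] assms(1) by linarith
  then have denominator: "q * ln (z ^ 10) \<le> z ^ 5 * (10 * z)"
    unfolding ln using assms by (intro mult_mono) auto
  have numerator: "z + 2 * z ^ 4 \<le> 3 * z ^ 4"
    using self_le_power[of z 4] assms(1) by simp
  have "(z + 2 * z ^ 4) * (q * ln (z ^ 10)) \<le> (3 * z ^ 4) * (z ^ 5 * (10 * z))"
    using mult_mono[OF numerator denominator] assms by simp
  also have "\<dots> = 30 * z ^ (4 + 5 + 1)" by (simp only: power_add power_one_right ac_simps)
  finally have "(z + 2 * z ^ 4) * (q * ln (z ^ 10)) \<le> 30 * z ^ 10" by simp
  moreover have "q * ln (z ^ 10) > 0" using assms by simp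
  ultimately show ?thesis by (simp only: pos_le_divide_eq)
qed

theorem brun_titchmarsh_weak:
  fixes f :: nat and t :: real
  assumes f: "f \<ge> 1" and t: "t \<ge> 2"
  shows "real (card {p. prime p \<and> f\<^sup>2 \<le> p \<and> real p \<le> t \<and> [p = 1] (mod f)})
         \<le> 40 * t / (real (totient f) * ln t)"
proof (cases "real (f\<^sup>2) \<le> t")
  case False
  have "real (f\<^sup>2) \<le> t" if "f\<^sup>2 \<le> p" "real p \<le> t" for p :: nat
    using that of_nat_mono[of "f\<^sup>2" p, where 'a=real] by linarith
  with False have empty: "{p. prime p \<and> f\<^sup>2 \<le> p \<and> real p \<le> t \<and> [p = 1] (mod f)} = {}"
    by blast
  show ?thesis unfolding empty using f t by simp
next
  case True
  (* Sifting up to z = t^(1/10) leaves a remainder of size z^4; since f^2 <= t gives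
     totient f <= z^5, this is small compared with t / (totient f * ln t). *)
  define z where "z = t powr (1/10)"
  have "z > 1" unfolding z_def using t by simp
  have "z ^ 10 = t"
  proof -
    have "z ^ 10 = z powr real 10" using \<open>z > 1\<close> by (intro powr_realpow[symmetric]) simp
    also have "\<dots> = t powr (1/10 * real 10)" unfolding z_def by (rule powr_powr)
    also have "\<dots> = t" using t by simp
    finally show ?thesis .
  qed
  interpret selberg_sieve f z using f \<open>z > 1\<close> by unfold_locales auto
  have "(z ^ 5)\<^sup>2 = t" unfolding \<open>z ^ 10 = t\<close>[symmetric] by (simp only: power_mult[symmetric]) simp
  then have "(real f)\<^sup>2 \<le> (z ^ 5)\<^sup>2" unfolding of_nat_power[symmetric] by (simp only: True)
  then have "real f \<le> z ^ 5" by (rule power2_le_imp_le) (use \<open>z > 1\<close> in simp)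
  moreover have "real (totient f) \<le> real f" using totient_le[of f] by simp
  ultimately have totient_bound: "real (totient f) \<le> z ^ 5" by linarith
  have totient_pos: "real (totient f) > 0" using f by simp
  have ln_t: "ln t = 10 * ln z"
    using \<open>z > 1\<close> unfolding \<open>z ^ 10 = t\<close>[symmetric] by (simp add: ln_realpow)
  have "card {p. prime p \<and> f\<^sup>2 \<le> p \<and> real p \<le> t \<and> [p = 1] (mod f)}
      \<le> card {p. prime p \<and> real p \<le> t \<and> [p = 1] (mod f)}"
    by (intro card_mono finite_subset[OF _ finite_primes_le[of t]]) auto
  then have "real (card {p. prime p \<and> f\<^sup>2 \<le> p \<and> real p \<le> t \<and> [p = 1] (mod f)})
      \<le> real (card {p. prime p \<and> real p \<le> t \<and> [p = 1] (mod f)})" by simp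
  also have "\<dots> \<le> z + t / (real (totient f) * ln z) + 2 * z ^ 4"
    using t \<open>z > 1\<close> by (intro card_primes_cong_one_le) auto
  also have "\<dots> = 10 * t / (real (totient f) * ln t) + (z + 2 * z ^ 4)"
    unfolding ln_t by simp
  also have "\<dots> \<le> 10 * t / (real (totient f) * ln t) + 30 * t / (real (totient f) * ln t)"
    using sieve_remainder_le[OF \<open>z > 1\<close> totient_pos totient_bound] unfolding \<open>z ^ 10 = t\<close>
    by (rule add_left_mono)
  finally show ?thesis by (simp add: add_divide_distrib[symmetric])
qed

lemma floor_log2_bounds:
  fixes y :: real
  assumes "y \<ge> 1"
  shows "2 ^ nat \<lfloor>log 2 y\<rfloor> \<le> y" and "y < 2 ^ (nat \<lfloor>log 2 y\<rfloor> + 1)"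
proof -
  define j where "j = nat \<lfloor>log 2 y\<rfloor>"
  have "real j = of_int \<lfloor>log 2 y\<rfloor>" unfolding j_def using assms by simp
  then have "real j \<le> log 2 y" "log 2 y < real j + 1" by linarith+
  then have "2 powr real j \<le> y" "y < 2 powr (real j + 1)"
    using assms by (simp_all add: le_log_iff log_less_iff)
  moreover have "(2::real) powr real j = 2 ^ j" "(2::real) powr (real j + 1) = 2 ^ (j + 1)"
    by (simp_all add: powr_add powr_realpow)
  ultimately show "2 ^ j \<le> y" "y < 2 ^ (j + 1)" by simp_all
qed

lemma sum_inverse_mult_complement:
  fixes K :: nat
  shows "(\<Sum>j<K. 1 / ((real j + 1) * (real K - real j))) = 2 * harm K / (real K + 1)"
proof -
  have "(\<Sum>j<K. 1 / ((real j + 1) * (real K - real j)))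
      = (\<Sum>j<K. (1 / (real j + 1) + 1 / (real K - real j)) / (real K + 1))"
  proof (rule sum.cong[OF refl])
    fix j assume "j \<in> {..<K}"
    define a where "a = real j + 1"
    define b where "b = real K - real j"
    have "a > 0" "b > 0" "real K + 1 = a + b" unfolding a_def b_def using \<open>j \<in> {..<K}\<close> by auto
    moreover have "1 / a + 1 / b = (a + b) / (a * b)" using \<open>a > 0\<close> \<open>b > 0\<close> by (simp add: field_simps)
    ultimately have "1 / (a * b) = (1 / a + 1 / b) / (real K + 1)" by simp
    then show "1 / ((real j + 1) * (real K - real j)) = (1 / (real j + 1) + 1 / (real K - real j)) / (real K + 1)"
      unfolding a_def b_def .
  qed
  also have "\<dots> = ((\<Sum>j<K. 1 / (real j + 1)) + (\<Sum>j<K. 1 / (real K - real j))) / (real K + 1)"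
    by (simp add: sum_divide_distrib[symmetric] sum.distrib)
  also have "(\<Sum>j<K. 1 / (real K - real j)) = (\<Sum>j<K. 1 / (real j + 1))"
  proof -
    have "(\<Sum>j<K. 1 / (real K - real j)) = (\<Sum>j<K. (\<lambda>i. 1 / (real i + 1)) (K - Suc j))"
      by (intro sum.cong refl) (auto simp: of_nat_diff)
    also have "\<dots> = (\<Sum>j<K. 1 / (real j + 1))" by (rule sum.nat_diff_reindex)
    finally show ?thesis .
  qed
  also have "(\<Sum>j<K. 1 / (real j + 1)) = harm K"
    unfolding harm_altdef by (simp add: divide_inverse add.commute)
  finally show ?thesis by simp
qed

lemma harm_le_one_plus_ln: "K \<ge> 1 \<Longrightarrow> harm K \<le> 1 + ln (real K)"
  using euler_mascheroni_sequence_decreasing[of 1 K] by (simp add: harm_expand)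

lemma sum_inverse_mult_complement_le:
  fixes K :: nat and L :: real
  assumes K: "K \<ge> 1" "real K \<le> L" "L < real K + 1"
  shows "(\<Sum>j<K. 1 / ((real j + 1) * (real K - real j))) \<le> 2 * (1 + ln L) / L"
proof -
  have "ln (real K) \<le> ln L" using K by (subst ln_le_cancel_iff) auto
  then have "harm K \<le> 1 + ln L" using harm_le_one_plus_ln[OF K(1)] by linarith
  moreover have "0 \<le> ln L" using K by simp
  ultimately have "2 * harm K / (real K + 1) \<le> 2 * (1 + ln L) / L"
    using K by (intro frac_le) auto
  then show ?thesis by (simp only: sum_inverse_mult_complement)
qed

lemma inverse_mult_ln_le:
  fixes x y :: real and j :: nat
  assumes "y > 0" "2 ^ j \<le> x / y" "x / y < 2 ^ (j + 1)"
  shows "1 / (y * ln (3 * x / y)) \<le> 2 ^ (j + 1) / (x * ((real j + 1) * ln 2))"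
proof -
  have "x / y > 0" using assms(2) zero_less_power[of "2::real" j] by linarith
  then have "x > 0" using assms(1) by (simp add: zero_less_divide_iff)
  have "2 * 2 ^ j \<le> 3 * (x / y)"
    using assms(2) zero_le_power[of "2::real" j] by linarith
  then have "(2::real) ^ (j + 1) \<le> 3 * x / y" by simp
  then have "ln (2 ^ (j + 1)) \<le> ln (3 * x / y)"
    using assms(1) \<open>x > 0\<close> by (subst ln_le_cancel_iff) auto
  moreover have "ln ((2::real) ^ (j + 1)) = (real j + 1) * ln 2" by (subst ln_realpow) simp_all
  ultimately have ln_ge: "(real j + 1) * ln 2 \<le> ln (3 * x / y)" by linarith
  have j_pos: "(real j + 1) * ln 2 > 0" by simp
  with ln_ge have ln_pos: "ln (3 * x / y) > 0" by linarith
  have "1 / y \<le> 2 ^ (j + 1) / x" using assms \<open>x > 0\<close> by (simp add: field_simps)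
  moreover have "1 / ln (3 * x / y) \<le> 1 / ((real j + 1) * ln 2)"
    by (rule divide_left_mono[OF ln_ge _ mult_pos_pos[OF ln_pos j_pos]]) simp
  moreover have "0 \<le> 2 ^ (j + 1) / x" using \<open>x > 0\<close> by simp
  moreover have "0 \<le> 1 / ln (3 * x / y)" using less_imp_le[OF ln_pos] by simp
  ultimately have "1 / y * (1 / ln (3 * x / y)) \<le> 2 ^ (j + 1) / x * (1 / ((real j + 1) * ln 2))"
    by (rule mult_mono)
  then show ?thesis by simp
qed

lemma dyadic_block_sum_le:
  fixes f j :: nat and x :: real and P :: "nat set"
  assumes f: "f \<ge> 1" and x: "2 ^ (j + 1) \<le> x"
    and P: "\<And>p. p \<in> P \<Longrightarrow> prime p \<and> f\<^sup>2 \<le> p \<and> [p = 1] (mod f)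
                              \<and> 2 ^ j \<le> x / real p \<and> x / real p < 2 ^ (j + 1)"
  shows "(\<Sum>p\<in>P. 1 / (real p * ln (3 * x / real p)))
         \<le> 80 / (real (totient f) * ln 2 * (real j + 1) * ln (x / 2 ^ j))"
proof -
  define t where "t = x / 2 ^ j"
  define B where "B = 2 ^ (j + 1) / (x * ((real j + 1) * ln 2))"
  have x_eq: "x = t * 2 ^ j" unfolding t_def by simp
  have "t \<ge> 2" unfolding t_def using x by (simp add: field_simps)
  have "x > 0" using x zero_less_power[of "2::real" "j + 1"] by linarith
  have term_le: "1 / (real p * ln (3 * x / real p)) \<le> B" if "p \<in> P" for p
    unfolding B_def using P[OF that] prime_gt_0_nat by (intro inverse_mult_ln_le) auto
  have "P \<subseteq> {p. prime p \<and> f\<^sup>2 \<le> p \<and> real p \<le> t \<and> [p = 1] (mod f)}"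
  proof
    fix p assume "p \<in> P"
    with P have "prime p" "2 ^ j \<le> x / real p" by auto
    then have "real p \<le> t" unfolding t_def using prime_gt_0_nat by (simp add: field_simps)
    with P[OF \<open>p \<in> P\<close>] show "p \<in> {p. prime p \<and> f\<^sup>2 \<le> p \<and> real p \<le> t \<and> [p = 1] (mod f)}" by simp
  qed
  moreover have "finite {p. prime p \<and> f\<^sup>2 \<le> p \<and> real p \<le> t \<and> [p = 1] (mod f)}"
    by (rule finite_subset[OF _ finite_primes_le[of t]]) auto
  ultimately have "real (card P) \<le> real (card {p. prime p \<and> f\<^sup>2 \<le> p \<and> real p \<le> t \<and> [p = 1] (mod f)})"
    by (intro of_nat_mono card_mono)
  also have "\<dots> \<le> 40 * t / (real (totient f) * ln t)"
    using f \<open>t \<ge> 2\<close> by (rule brun_titchmarsh_weak)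
  finally have card: "real (card P) \<le> 40 * t / (real (totient f) * ln t)" .
  have "(\<Sum>p\<in>P. 1 / (real p * ln (3 * x / real p))) \<le> real (card P) * B"
    using term_le by (rule sum_bounded_above)
  also have "\<dots> \<le> 40 * t / (real (totient f) * ln t) * B"
    using card \<open>x > 0\<close> unfolding B_def by (intro mult_right_mono) auto
  also have "\<dots> = 80 / (real (totient f) * ln 2 * (real j + 1) * ln t)"
  proof -
    define a where "a = (2::real) ^ j"
    define c where "c = (real j + 1) * ln 2"
    define l where "l = ln t"
    have pos: "a > 0" "c > 0" "l > 0" "t > 0" "real (totient f) > 0"
      unfolding a_def c_def l_def using \<open>t \<ge> 2\<close> f by simp_all
    have "B = 2 * a / (t * a * c)" unfolding B_def x_eq a_def c_def by simp
    then have "40 * t / (real (totient f) * l) * B = 80 / (real (totient f) * l * c)"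
      using pos by (simp add: field_simps)
    moreover have "real (totient f) * l * c = real (totient f) * ln 2 * (real j + 1) * ln t"
      unfolding l_def c_def by (simp only: mult_ac)
    ultimately show ?thesis unfolding l_def by simp
  qed
  finally show ?thesis unfolding t_def .
qed

lemma dyadic_block_sum_le_complement:
  fixes f j K :: nat and x :: real and P :: "nat set"
  assumes f: "f \<ge> 1" and "j < K" "2 ^ K \<le> x"
    and P: "\<And>p. p \<in> P \<Longrightarrow> prime p \<and> f\<^sup>2 \<le> p \<and> [p = 1] (mod f)
                              \<and> 2 ^ j \<le> x / real p \<and> x / real p < 2 ^ (j + 1)"
  shows "(\<Sum>p\<in>P. 1 / (real p * ln (3 * x / real p)))
         \<le> 80 / (real (totient f) * ln 2 * ln 2) * (1 / ((real j + 1) * (real K - real j)))"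
proof -
  have "x > 0" using assms(3) zero_less_power[of "2::real" K] by linarith
  have "(2::real) ^ (j + 1) \<le> 2 ^ K" using \<open>j < K\<close> by (intro power_increasing) auto
  then have "2 ^ (j + 1) \<le> x" using assms(3) by linarith
  have "ln ((2::real) ^ K) \<le> ln x" using assms(3) \<open>x > 0\<close> by (subst ln_le_cancel_iff) auto
  then have "real K * ln 2 \<le> ln x" by (simp add: ln_realpow)
  moreover have "ln (x / 2 ^ j) = ln x - real j * ln 2" using \<open>x > 0\<close> by (simp add: ln_div ln_realpow)
  ultimately have lower: "(real K - real j) * ln 2 \<le> ln (x / 2 ^ j)" by (simp add: left_diff_distrib)
  have "(real K - real j) * ln 2 > 0" using \<open>j < K\<close> by simp
  with lower have "ln (x / 2 ^ j) > 0" by linarith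
  have "(\<Sum>p\<in>P. 1 / (real p * ln (3 * x / real p)))
      \<le> 80 / (real (totient f) * ln 2 * (real j + 1) * ln (x / 2 ^ j))"
    using f \<open>2 ^ (j + 1) \<le> x\<close> P by (rule dyadic_block_sum_le)
  also have "\<dots> \<le> 80 / (real (totient f) * ln 2 * (real j + 1) * ((real K - real j) * ln 2))"
    using lower f \<open>j < K\<close> \<open>ln (x / 2 ^ j) > 0\<close>
    by (intro divide_left_mono mult_left_mono mult_pos_pos) auto
  also have "\<dots> = 80 / (real (totient f) * ln 2 * ln 2) * (1 / ((real j + 1) * (real K - real j)))"
    using \<open>j < K\<close> f by (simp add: field_simps)
  finally show ?thesis .
qed

lemma sum_inverse_prime_mult_ln_le:
  fixes f :: nat and x :: real
  assumes f: "f \<ge> 1" and x: "x \<ge> 3"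
  shows "(\<Sum>p\<in>{p. prime p \<and> f\<^sup>2 \<le> p \<and> real p \<le> x \<and> [p = 1] (mod f)}. 1 / (real p * ln (3 * x / real p)))
         \<le> 160 / ln 2 * (1 + ln (log 2 x)) / (real (totient f) * ln x)"
proof -
  define Ps where "Ps = {p. prime p \<and> f\<^sup>2 \<le> p \<and> real p \<le> x \<and> [p = 1] (mod f)}"
  define g where "g p = 1 / (real p * ln (3 * x / real p))" for p :: nat
  define L where "L = log 2 x"
  define K where "K = nat \<lfloor>L\<rfloor>"
  define block where "block p = nat \<lfloor>log 2 (x / real p)\<rfloor>" for p :: nat
  define c where "c = 80 / (real (totient f) * ln 2 * ln 2)"
  have "L \<ge> 1" unfolding L_def using x by simp
  then have K: "K \<ge> 1" "real K \<le> L" "L < real K + 1" unfolding K_def by linarith+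
  have two_pow_K: "2 ^ K \<le> x"
  proof -
    have "2 powr real K \<le> x" using K(2) x unfolding L_def by (subst (asm) le_log_iff) auto
    then show ?thesis by (simp add: powr_realpow)
  qed
  have "ln x = L * ln 2" unfolding L_def log_def by simp
  have "finite Ps" unfolding Ps_def by (rule finite_subset[OF _ finite_primes_le[of x]]) auto
  have p_ge: "real p \<ge> 2" if "p \<in> Ps" for p
    using that prime_ge_2_nat unfolding Ps_def by force
  have block: "2 ^ block p \<le> x / real p" "x / real p < 2 ^ (block p + 1)" if "p \<in> Ps" for p
    using floor_log2_bounds[of "x / real p"] that p_ge[OF that] unfolding block_def Ps_def by auto
  have block_lt: "block p < K" if "p \<in> Ps" for p
  proof -
    have "2 ^ (block p + 1) \<le> 2 * (x / real p)" using block(1)[OF that] by simp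
    also have "\<dots> \<le> x" using p_ge[OF that] x by (simp add: field_simps)
    finally have "real (block p + 1) \<le> L" unfolding L_def by (intro le_log_of_power) auto
    then show ?thesis unfolding K_def by linarith
  qed
  have "(\<Sum>p\<in>Ps. g p) = (\<Sum>j<K. \<Sum>p\<in>{p \<in> Ps. block p = j}. g p)"
    using block_lt \<open>finite Ps\<close> by (intro sum.group[symmetric]) auto
  also have "\<dots> \<le> (\<Sum>j<K. c * (1 / ((real j + 1) * (real K - real j))))"
  proof (intro sum_mono)
    fix j assume "j \<in> {..<K}"
    then show "(\<Sum>p\<in>{p \<in> Ps. block p = j}. g p) \<le> c * (1 / ((real j + 1) * (real K - real j)))"
      unfolding g_def c_def using f two_pow_K
      by (intro dyadic_block_sum_le_complement) (use block in \<open>auto simp: Ps_def\<close>)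
  qed
  also have "\<dots> = c * (\<Sum>j<K. 1 / ((real j + 1) * (real K - real j)))"
    by (rule sum_distrib_left[symmetric])
  also have "\<dots> \<le> c * (2 * (1 + ln L) / L)"
    using sum_inverse_mult_complement_le[OF K] f unfolding c_def by (intro mult_left_mono) auto
  also have "\<dots> = 160 / ln 2 * (1 + ln L) / (real (totient f) * ln x)"
    unfolding c_def \<open>ln x = L * ln 2\<close> using \<open>L \<ge> 1\<close> by (simp add: field_simps)
  finally show ?thesis unfolding Ps_def g_def L_def .
qed

lemma ex_one_plus_ln_log2_le_ln_ln:
  "\<exists>C > 0. \<forall>x::real. x \<ge> 3 \<longrightarrow> 1 + ln (log 2 x) \<le> C * ln (ln x)"
proof -
  have "exp 1 < (3::real)" using e_less_272 by simp
  then have "ln 3 > (1::real)" by (metis exp_gt_zero ln_exp ln_less_cancel_iff zero_less_numeral)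
  then have a: "ln (ln 3) > (0::real)" by simp
  have "ln (ln (2::real)) < 0" using ln_less_zero[of "ln 2"] ln_2_less_1 by simp
  then have b: "1 - ln (ln 2) > (0::real)" by linarith
  define C where "C = 1 + (1 - ln (ln 2)) / ln (ln (3::real))"
  have "1 + ln (log 2 x) \<le> C * ln (ln x)" if "x \<ge> 3" for x :: real
  proof -
    have "ln (ln 3) \<le> ln (ln x)" using that \<open>ln 3 > 1\<close> by simp
    then have "1 \<le> ln (ln x) / ln (ln 3)" using a by simp
    then have "(1 - ln (ln 2)) * 1 \<le> (1 - ln (ln 2)) * (ln (ln x) / ln (ln 3))"
      using b by (intro mult_left_mono) auto
    then have "1 - ln (ln 2) \<le> (1 - ln (ln 2)) / ln (ln 3) * ln (ln x)" by simp
    moreover have "ln (log 2 x) = ln (ln x) - ln (ln 2)"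
      using that \<open>ln 3 > 1\<close> by (simp add: log_def ln_div)
    ultimately show ?thesis unfolding C_def by (simp add: algebra_simps)
  qed
  moreover have "C > 0" unfolding C_def using divide_pos_pos[OF b a] by linarith
  ultimately show ?thesis by blast
qed

theorem lemma3p3:
  shows "\<exists>c::real. c > 0 \<and>
    (\<forall>(f::nat) (x::real). f \<ge> 1 \<longrightarrow> x \<ge> 3 \<longrightarrow>
      (\<Sum>p\<in>{p::nat. prime p \<and> f^2 \<le> p \<and> real p \<le> x \<and> [p = 1] (mod f)}.
          1 / (real p * ln (3 * x / real p)))
      \<le> c * ln (ln x) / (real (totient f) * ln x))"
proof -
  obtain C where "C > 0" and C: "\<And>x::real. x \<ge> 3 \<Longrightarrow> 1 + ln (log 2 x) \<le> C * ln (ln x)"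
    using ex_one_plus_ln_log2_le_ln_ln by blast
  show ?thesis
  proof (intro exI[of _ "160 / ln 2 * C"] conjI allI impI)
    show "160 / ln 2 * C > 0" using \<open>C > 0\<close> by simp
    fix f :: nat and x :: real
    assume f: "f \<ge> 1" and x: "x \<ge> 3"
    have "(\<Sum>p\<in>{p. prime p \<and> f^2 \<le> p \<and> real p \<le> x \<and> [p = 1] (mod f)}. 1 / (real p * ln (3 * x / real p)))
        \<le> 160 / ln 2 * (1 + ln (log 2 x)) / (real (totient f) * ln x)"
      using f x by (rule sum_inverse_prime_mult_ln_le)
    also have "\<dots> \<le> 160 / ln 2 * (C * ln (ln x)) / (real (totient f) * ln x)"
      using C[OF x] f x by (intro divide_right_mono mult_left_mono) auto
    finally show "(\<Sum>p\<in>{p. prime p \<and> f^2 \<le> p \<and> real p \<le> x \<and> [p = 1] (mod f)}.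
        1 / (real p * ln (3 * x / real p))) \<le> 160 / ln 2 * C * ln (ln x) / (real (totient f) * ln x)"
      by simp
  qed
qed

end
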